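(* Let $L,d\in \mathbb{N}$, $q\in [1,\infty]$, $c\in (0,\infty)$, and $N_1,\dots , N_{L-1}\in \mathbb{N}$. Then for every $m\in\mathbb{N}$, \[ \mathrm{err}_m^{MC}\left(\mathcal{H}_{(d,N_1,\dots , N_{L-1},1),c}^q,L^\infty([0,1]^d)\right) \le \begin{cases} 2\sqrt{d}\cdot c^L\cdot m^{-\frac1d} & \text{if } q\le 2, \\ 2\sqrt{d}\cdot c^L\cdot (\sqrt{d}\cdot N_1 \cdots N_{L-1})^{1-\frac{2}{q}}\cdot m^{-\frac1d} & \text{if } q\geq 2 .\end{cases} \]
   Context: ReLU: $\varrho(x)=\max\{0,x\}$, applied componentwise. For an architecture $(N_0,\dots,N_L)$ and coefficients $\Phi=((W^i,b^i))_{i=1}^L$ with $W^i\in\mathbb{R}^{N_i\times N_{i-1}}$, $b^i\in\mathbb{R}^{N_i}$, the realization is $R(\Phi)(x)=x^L$ with $x^0=x$, $x^i=\varrho(W^ix^{i-1}+b^i)$ for $1\le i\le L-1$, $x^L=W^Lx^{L-1}+b^L$. $\|\cdot\|_{\ell^q}$ of a matrix/vector is the entrywise $\ell^q$ norm, $\|\Phi\|_{\ell^q}=\max_i\max\{\|W^i\|_{\ell^q},\|b^i\|_{\ell^q}\}$, and $\mathcal{H}^q_{(N_0,\dots,N_L),c}=\{R(\Phi):\|\Phi\|_{\ell^q}\le c\}$, viewed as functions on $[0,1]^{N_0}$. Here $N_0=d$, $N_L=1$; $2/q=0$ for $q=\infty$. Algorithms: for a Banach space $Y$ and $U\subset C([0,1]^d)\cap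 Y$, $A:U\to Y$ is an adaptive deterministic method using $m$ point samples if there are $f_1\in[0,1]^d$, maps $f_i:([0,1]^d)^{i-1}\times\mathbb{R}^{i-1}\to[0,1]^d$ and $Q:([0,1]^d)^m\times\mathbb{R}^m\to Y$ such that, with $x_1=f_1$, $x_i=f_i(x_1,\dots,x_{i-1},u(x_1),\dots,u(x_{i-1}))$, $A(u)=Q(x_1,\dots,x_m,u(x_1),\dots,u(x_m))$ for all $u\in U$; these form $\mathrm{Alg}_m(U,Y)$. An adaptive random method using $m$ samples on average is $(\mathbf{A},\mathbf{m})$, $\mathbf{A}=(A_\omega)_{\omega\in\Omega}$ on a probability space, $\mathbf{m}:\Omega\to\mathbb{N}$ measurable with $\mathbb{E}[\mathbf{m}]\le m$, $\omega\mapsto A_\omega(u)$ Borel measurable for each $u$, and $A_\omega\in\mathrm{Alg}_{\mathbf{m}(\omega)}(U,Y)$; these form $\mathrm{Alg}^{MC}_m(U,Y)$. Then $\mathrm{err}^{MC}_m(U,Y)=\inf_{(\mathbf{A},\mathbf{m})\in\mathrm{Alg}^{MC}_m(U,Y)}\sup_{u\in U}\mathbb{E}[\|u-A_\omega(u)\|_Y]$. *)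

theory Defs
  imports "HOL-Probability.Probability"
begin

type_synonym point = "nat \<Rightarrow> real"
type_synonym layer = "(nat \<Rightarrow> nat \<Rightarrow> real) \<times> (nat \<Rightarrow> real)"

definition relu :: "real \<Rightarrow> real" where
  "relu x = max 0 x"

definition affine :: "nat \<Rightarrow> (nat \<Rightarrow> nat \<Rightarrow> real) \<Rightarrow> (nat \<Rightarrow> real) \<Rightarrow> point \<Rightarrow> point" where
  "affine n W b x = (\<lambda>i. (\<Sum>j<n. W i j * x j) + b i)"

text \<open>Architecture arch = [N_0,...,N_L]; coefficients Phi = [(W^1,b^1),...,(W^L,b^L)]
  (list index i holds layer i+1, with input dimension arch!i).
  hidden_state arch Phi i x = x^i for i <= L-1.\<close>
fun hidden_state :: "nat list \<Rightarrow> layer list \<Rightarrow> nat \<Rightarrow> point \<Rightarrow> point" where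
  "hidden_state arch Phi 0 x = x"
| "hidden_state arch Phi (Suc i) x =
     (\<lambda>k. relu (affine (arch ! i) (fst (Phi ! i)) (snd (Phi ! i)) (hidden_state arch Phi i x) k))"

text \<open>Realization R(Phi)(x) = x^L (output dimension N_L = 1, so the single component 0).\<close>
definition realization :: "nat list \<Rightarrow> layer list \<Rightarrow> point \<Rightarrow> real" where
  "realization arch Phi x =
     (let L = length Phi in
      affine (arch ! (L - 1)) (fst (Phi ! (L - 1))) (snd (Phi ! (L - 1)))
             (hidden_state arch Phi (L - 1) x) 0)"

definition lq_norm :: "ereal \<Rightarrow> 'i set \<Rightarrow> ('i \<Rightarrow> real) \<Rightarrow> real" where
  "lq_norm q A f =
     (if q = \<infinity> then Max (insert 0 ((\<lambda>a. \<bar>f a\<bar>) ` A))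
      else (\<Sum>a\<in>A. \<bar>f a\<bar> powr real_of_ereal q) powr (1 / real_of_ereal q))"

definition net_norm :: "ereal \<Rightarrow> nat list \<Rightarrow> layer list \<Rightarrow> real" where
  "net_norm q arch Phi =
     Max ((\<lambda>i. max (lq_norm q ({..<arch ! Suc i} \<times> {..<arch ! i}) (\<lambda>(r, s). fst (Phi ! i) r s))
                    (lq_norm q {..<arch ! Suc i} (snd (Phi ! i))))
          ` {..<length Phi})"

definition hyp_class :: "ereal \<Rightarrow> nat list \<Rightarrow> real \<Rightarrow> (point \<Rightarrow> real) set" where
  "hyp_class q arch c =
     {realization arch Phi | Phi. length Phi = length arch - 1 \<and> net_norm q arch Phi \<le> c}"

text \<open>[0,1]^d with Lebesgue measure; points are extensional functions on {..<d}.\<close>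
definition cube_measure :: "nat \<Rightarrow> point measure" where
  "cube_measure d = Pi\<^sub>M {..<d} (\<lambda>_. restrict_space lborel {0..1})"

definition cube :: "nat \<Rightarrow> point set" where
  "cube d = PiE {..<d} (\<lambda>_. {0..1})"

text \<open>L^infinity (semi)norm, with values in [0,infinity] (infinite / top if not measurable).\<close>
definition linf_enorm :: "nat \<Rightarrow> (point \<Rightarrow> real) \<Rightarrow> ennreal" where
  "linf_enorm d g = e2ennreal (esssup (cube_measure d) (\<lambda>x. ereal \<bar>g x\<bar>))"

text \<open>Elements of Y = L^infinity([0,1]^d) (representatives).\<close>
definition Linf :: "nat \<Rightarrow> (point \<Rightarrow> real) set" where
  "Linf d = {g. g \<in> borel_measurable (cube_measure d) \<and> linf_enorm d g < \<infinity>}"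

definition Linf_borel :: "nat \<Rightarrow> (point \<Rightarrow> real) measure" where
  "Linf_borel d = sigma (Linf d)
     {U. U \<subseteq> Linf d \<and> (\<forall>f\<in>U. \<exists>e>0. \<forall>g\<in>Linf d.
            linf_enorm d (\<lambda>x. f x - g x) < ennreal e \<longrightarrow> g \<in> U)}"

fun samples :: "(nat \<Rightarrow> point list \<Rightarrow> real list \<Rightarrow> point) \<Rightarrow> (point \<Rightarrow> real) \<Rightarrow> nat \<Rightarrow> point list" where
  "samples f u 0 = []"
| "samples f u (Suc k) = (let xs = samples f u k in xs @ [f k xs (map u xs)])"

definition Alg :: "nat \<Rightarrow> (point \<Rightarrow> real) set \<Rightarrow> nat \<Rightarrow> ((point \<Rightarrow> real) \<Rightarrow> (point \<Rightarrow> real)) set" where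
  "Alg m U d = {A. \<exists>f Q.
      (\<forall>k xs ys. f k xs ys \<in> cube d) \<and>
      (\<forall>xs ys. Q xs ys \<in> Linf d) \<and>
      (\<forall>u\<in>U. A u = Q (samples f u m) (map u (samples f u m)))}"

definition AlgMC :: "'w itself \<Rightarrow> nat \<Rightarrow> (point \<Rightarrow> real) set \<Rightarrow> nat \<Rightarrow>
    ('w measure \<times> ('w \<Rightarrow> (point \<Rightarrow> real) \<Rightarrow> (point \<Rightarrow> real)) \<times> ('w \<Rightarrow> nat)) set" where
  "AlgMC _ m U d = {(P, A, mm).
      prob_space P \<and>
      mm \<in> measurable P (count_space UNIV) \<and>
      (\<integral>\<^sup>+ \<omega>. of_nat (mm \<omega>) \<partial>P) \<le> of_nat m \<and>
      (\<forall>u\<in>U. (\<lambda>\<omega>. A \<omega> u) \<in> measurable P (Linf_borel d)) \<and>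
      (\<forall>\<omega>\<in>space P. A \<omega> \<in> Alg (mm \<omega>) U d)}"

definition errMC :: "'w itself \<Rightarrow> nat \<Rightarrow> (point \<Rightarrow> real) set \<Rightarrow> nat \<Rightarrow> ennreal" where
  "errMC w m U d = (INF (P, A, mm) \<in> AlgMC w m U d.
      SUP u\<in>U. \<integral>\<^sup>+ \<omega>. linf_enorm d (\<lambda>x. u x - A \<omega> u x) \<partial>P)"

end

theory Submission
  imports Defs
begin

(* Sample u at the n^d <= m nodes of the uniform grid of mesh 1/n, n = floor (m powr (1/d)),
   and extend the samples piecewise constantly over the cells. If u is K-Lipschitz for the
   Euclidean norm this deterministic algorithm has L^infinity error at most K sqrt d / n, which is
   at most 2 sqrt d K m powr (-1/d); a deterministic algorithm is a Monte Carlo method over a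
   one-point probability space.
   Every network in the class is Lipschitz: ReLU is 1-Lipschitz and an affine layer is Lipschitz
   with the Frobenius norm of its weight matrix, which is at most k powr ((1 - 2/q)_+ / 2) times
   its entrywise l^q norm, k the number of entries (monotonicity of l^q norms for q <= 2, the power
   mean inequality for q > 2). The product of the numbers of entries over all layers is
   d (N_1 ... N_(L-1))^2, so K = c^L (sqrt d N_1 ... N_(L-1)) powr (1 - 2/q)_+. *)

section \<open>Comparing the l^2 and l^q norms\<close>

lemma Bernoulli_inequality_powr:
  fixes t r :: real
  assumes "t \<ge> 0" "r \<ge> 1"
  shows "1 + r * (t - 1) \<le> t powr r"
proof (cases "t = 0")
  case True
  then show ?thesis using assms by simp
next
  case False
  have "r * (t - 1) \<le> t powr r - 1 powr r"
  proof (rule convex_on_imp_above_tangent[where A = "{0<..}"])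
    show "convex_on {0<..} (\<lambda>x. x powr r)" using powr_convex assms by simp
    show "((\<lambda>x. x powr r) has_field_derivative r) (at 1 within {0<..})"
      by (rule derivative_eq_intros | simp)+
  qed (use assms False in \<open>auto simp: interior_open\<close>)
  then show ?thesis by simp
qed

lemma sum_le_card_powr_mult_sum_powr:
  fixes b :: "'a \<Rightarrow> real"
  assumes A: "finite A" "A \<noteq> {}" and b: "\<And>i. i \<in> A \<Longrightarrow> b i \<ge> 0" and r: "r \<ge> 1"
  shows "(\<Sum>i\<in>A. b i) \<le> real (card A) powr (1 - 1/r) * (\<Sum>i\<in>A. b i powr r) powr (1/r)"
proof -
  define n where "n = real (card A)"
  define S where "S = (\<Sum>i\<in>A. b i powr r)"
  have n: "n > 0" using A by (simp add: n_def card_gt_0_iff)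
  show ?thesis
  proof (cases "S = 0")
    case True
    then have "\<forall>i\<in>A. b i = 0" using A b r by (simp add: S_def sum_nonneg_eq_0_iff)
    then show ?thesis by simp
  next
    case False
    then have S: "S > 0" by (simp add: S_def order_neq_le_trans sum_nonneg)
    define T where "T = (S / n) powr (1/r)"
    have T: "T > 0" "T powr r = S / n" using S n r by (simp_all add: T_def powr_powr)
    (* the tangent of x powr r at 1, applied to b i / T with T the r-th power mean *)
    have "(\<Sum>i\<in>A. b i / T) \<le> (\<Sum>i\<in>A. 1 + ((b i / T) powr r - 1) / r)"
    proof (rule sum_mono)
      fix i assume "i \<in> A"
      then have "1 + r * (b i / T - 1) \<le> (b i / T) powr r"
        using b r T by (intro Bernoulli_inequality_powr) auto
      then show "b i / T \<le> 1 + ((b i / T) powr r - 1) / r" using r by (simp add: field_simps)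
    qed
    also have "\<dots> = n + ((\<Sum>i\<in>A. (b i / T) powr r) - n) / r"
      by (simp add: sum.distrib sum_subtractf n_def flip: sum_divide_distrib)
    also have "(\<Sum>i\<in>A. (b i / T) powr r) = S / T powr r"
      using b T by (simp add: S_def powr_divide sum_divide_distrib)
    also have "\<dots> = n" using T S n by simp
    finally have "(\<Sum>i\<in>A. b i) \<le> n * T" using T by (simp add: field_simps flip: sum_divide_distrib)
    also have "n * T = n powr (1 - 1/r) * S powr (1/r)"
      using n S by (simp add: T_def powr_divide powr_diff)
    finally show ?thesis by (simp add: n_def S_def)
  qed
qed

lemma L2_set_le_lp_norm:
  fixes f :: "'a \<Rightarrow> real"
  assumes A: "finite A" and p: "0 < p" "p \<le> 2"
  shows "L2_set f A \<le> (\<Sum>a\<in>A. \<bar>f a\<bar> powr p) powr (1/p)"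
proof -
  define M where "M = (\<Sum>a\<in>A. \<bar>f a\<bar> powr p) powr (1/p)"
  show ?thesis
  proof (cases "M = 0")
    case True
    then have "\<forall>a\<in>A. f a = 0" using A by (simp add: M_def sum_nonneg_eq_0_iff)
    then show ?thesis by (simp add: L2_set_0')
  next
    case False
    then have M: "M > 0" by (simp add: M_def order_neq_le_trans)
    have M_p: "M powr p = (\<Sum>a\<in>A. \<bar>f a\<bar> powr p)" using p by (simp add: M_def powr_powr sum_nonneg)
    have "(\<Sum>a\<in>A. (\<bar>f a\<bar> / M)\<^sup>2) \<le> (\<Sum>a\<in>A. (\<bar>f a\<bar> / M) powr p)"
    proof (rule sum_mono)
      fix a assume "a \<in> A"
      then have "\<bar>f a\<bar> powr p \<le> M powr p" unfolding M_p using A by (intro member_le_sum) auto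
      then have "\<bar>f a\<bar> / M \<le> 1" using powr_less_mono2[of p M "\<bar>f a\<bar>"] M p by force
      then have "(\<bar>f a\<bar> / M) powr 2 \<le> (\<bar>f a\<bar> / M) powr p" using M p by (intro powr_mono') auto
      then show "(\<bar>f a\<bar> / M)\<^sup>2 \<le> (\<bar>f a\<bar> / M) powr p" using M by simp
    qed
    also have "\<dots> = 1" using M by (simp add: powr_divide flip: sum_divide_distrib M_p)
    finally have "(\<Sum>a\<in>A. (f a)\<^sup>2) \<le> M\<^sup>2"
      using M by (simp add: power_divide flip: sum_divide_distrib)
    then show ?thesis unfolding L2_set_def M_def[symmetric] using M by (simp add: real_le_lsqrt)
  qed
qed

lemma L2_set_abs [simp]: "L2_set (\<lambda>i. \<bar>f i\<bar>) A = L2_set f A"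
  by (simp add: L2_set_def)

(* the exponent (1 - 2/q)_+ of the bound, with 2/\<infinity> = 0 *)
definition l2_lq_exponent :: "ereal \<Rightarrow> real" where
  "l2_lq_exponent q = (if q \<le> 2 then 0 else if q = \<infinity> then 1 else 1 - 2 / real_of_ereal q)"

lemma L2_set_le_lq_norm:
  fixes f :: "'a \<Rightarrow> real"
  assumes A: "finite A" and q: "1 \<le> q"
  shows "L2_set f A \<le> real (card A) powr (l2_lq_exponent q / 2) * lq_norm q A f"
proof (cases "A = {}")
  case True
  then show ?thesis by simp
next
  case False
  then have n: "real (card A) > 0" using A by (simp add: card_gt_0_iff)
  consider "q = \<infinity>" | p where "q = ereal p" "1 \<le> p" "p \<le> 2" | p where "q = ereal p" "2 < p"
    using q by (cases q) force+
  then show ?thesis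
  proof cases
    case 1
    define M where "M = Max (insert 0 ((\<lambda>a. \<bar>f a\<bar>) ` A))"
    have "L2_set f A = L2_set (\<lambda>a. \<bar>f a\<bar>) A" by simp
    also have "\<dots> \<le> L2_set (\<lambda>_. M) A" by (rule L2_set_mono) (use A in \<open>auto simp: M_def\<close>)
    also have "\<dots> = sqrt (real (card A)) * M" using A by (simp add: L2_set_constant M_def)
    finally show ?thesis using 1 n by (simp add: lq_norm_def l2_lq_exponent_def M_def powr_half_sqrt)
  next
    case 2
    then show ?thesis using L2_set_le_lp_norm[OF A, of p f] n by (simp add: lq_norm_def l2_lq_exponent_def)
  next
    case (3 p)
    define S where "S = (\<Sum>a\<in>A. \<bar>f a\<bar> powr p)"
    have "((f a)\<^sup>2) powr (p/2) = \<bar>f a\<bar> powr p" for a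
      using powr_powr[of "\<bar>f a\<bar>" 2 "p/2"] by simp
    then have "(\<Sum>a\<in>A. (f a)\<^sup>2) \<le> real (card A) powr (1 - 2/p) * S powr (2/p)"
      using sum_le_card_powr_mult_sum_powr[OF A False, of "\<lambda>a. (f a)\<^sup>2" "p/2"] 3
      by (simp add: S_def)
    then have "L2_set f A \<le> sqrt (real (card A) powr (1 - 2/p) * S powr (2/p))"
      by (simp add: L2_set_def)
    also have "\<dots> = real (card A) powr ((1 - 2/p)/2) * S powr (1/p)"
      by (simp add: real_sqrt_mult powr_powr S_def sum_nonneg flip: powr_half_sqrt)
    finally show ?thesis using 3 by (simp add: lq_norm_def l2_lq_exponent_def S_def)
  qed
qed

section \<open>Lipschitz continuity of ReLU networks\<close>

lemma L2_set_cartesian_product: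
  assumes "finite A" "finite B"
  shows "L2_set (\<lambda>a. L2_set (W a) B) A = L2_set (\<lambda>(a, b). W a b) (A \<times> B)"
  using assms by (simp add: L2_set_def sum_nonneg sum.cartesian_product case_prod_unfold)

lemma L2_set_affine_diff_le:
  assumes "finite K"
  shows "L2_set (\<lambda>k. affine n W b x k - affine n W b y k) K
    \<le> L2_set (\<lambda>(k, j). W k j) (K \<times> {..<n}) * L2_set (\<lambda>j. x j - y j) {..<n}"
proof -
  define D where "D = L2_set (\<lambda>j. x j - y j) {..<n}"
  have row: "\<bar>affine n W b x k - affine n W b y k\<bar> \<le> L2_set (W k) {..<n} * D" for k
  proof -
    have "affine n W b x k - affine n W b y k = (\<Sum>j<n. W k j * (x j - y j))"
      by (simp add: affine_def sum_subtractf right_diff_distrib)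
    also have "\<bar>\<dots>\<bar> \<le> (\<Sum>j<n. \<bar>W k j\<bar> * \<bar>x j - y j\<bar>)"
      by (rule order_trans[OF sum_abs]) (simp add: abs_mult)
    also have "\<dots> \<le> L2_set (W k) {..<n} * D" unfolding D_def by (rule L2_set_mult_ineq)
    finally show ?thesis .
  qed
  have "L2_set (\<lambda>k. affine n W b x k - affine n W b y k) K
      = L2_set (\<lambda>k. \<bar>affine n W b x k - affine n W b y k\<bar>) K" by simp
  also have "\<dots> \<le> L2_set (\<lambda>k. L2_set (W k) {..<n} * D) K"
    by (rule L2_set_mono) (use row in auto)
  also have "\<dots> = L2_set (\<lambda>(k, j). W k j) (K \<times> {..<n}) * D"
    using assms by (simp add: D_def L2_set_cartesian_product flip: L2_set_left_distrib)
  finally show ?thesis by (simp add: D_def)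
qed

lemma relu_diff_abs_le: "\<bar>relu a - relu b\<bar> \<le> \<bar>a - b\<bar>"
  by (simp add: relu_def max_def)

definition layer_frobenius :: "nat list \<Rightarrow> layer list \<Rightarrow> nat \<Rightarrow> real" where
  "layer_frobenius arch Phi i =
     L2_set (\<lambda>(r, s). fst (Phi ! i) r s) ({..<arch ! Suc i} \<times> {..<arch ! i})"

lemma layer_frobenius_nonneg [simp]: "layer_frobenius arch Phi i \<ge> 0"
  by (simp add: layer_frobenius_def)

lemma hidden_state_diff_le:
  "L2_set (\<lambda>k. hidden_state arch Phi i x k - hidden_state arch Phi i y k) {..<arch ! i}
     \<le> (\<Prod>t<i. layer_frobenius arch Phi t) * L2_set (\<lambda>j. x j - y j) {..<arch ! 0}"
proof (induction i)
  case 0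
  then show ?case by simp
next
  case (Suc i)
  let ?a = "\<lambda>z. affine (arch ! i) (fst (Phi ! i)) (snd (Phi ! i)) (hidden_state arch Phi i z)"
  have "L2_set (\<lambda>k. hidden_state arch Phi (Suc i) x k - hidden_state arch Phi (Suc i) y k)
          {..<arch ! Suc i}
      = L2_set (\<lambda>k. \<bar>relu (?a x k) - relu (?a y k)\<bar>) {..<arch ! Suc i}"
    by simp
  also have "\<dots> \<le> L2_set (\<lambda>k. \<bar>?a x k - ?a y k\<bar>) {..<arch ! Suc i}"
    by (rule L2_set_mono) (simp_all add: relu_diff_abs_le)
  also have "\<dots> \<le> layer_frobenius arch Phi i
      * L2_set (\<lambda>k. hidden_state arch Phi i x k - hidden_state arch Phi i y k) {..<arch ! i}"
    unfolding L2_set_abs layer_frobenius_def by (rule L2_set_affine_diff_le) simp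
  also have "\<dots> \<le> layer_frobenius arch Phi i
      * ((\<Prod>t<i. layer_frobenius arch Phi t) * L2_set (\<lambda>j. x j - y j) {..<arch ! 0})"
    using Suc.IH by (rule mult_left_mono) (simp add: layer_frobenius_def)
  finally show ?case by (simp add: mult_ac)
qed

lemma realization_diff_le:
  assumes "length Phi = L" "L \<ge> 1" "arch ! L \<ge> 1"
  shows "\<bar>realization arch Phi x - realization arch Phi y\<bar>
     \<le> (\<Prod>t<L. layer_frobenius arch Phi t) * L2_set (\<lambda>j. x j - y j) {..<arch ! 0}"
proof -
  obtain K where L: "L = Suc K" using assms(2) by (cases L) auto
  let ?a = "\<lambda>z. affine (arch ! K) (fst (Phi ! K)) (snd (Phi ! K)) (hidden_state arch Phi K z)"
  have "\<bar>realization arch Phi x - realization arch Phi y\<bar> = \<bar>?a x 0 - ?a y 0\<bar>"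
    using assms(1) by (simp add: realization_def L)
  also have "\<dots> \<le> L2_set (\<lambda>k. ?a x k - ?a y k) {..<arch ! Suc K}"
    using member_le_L2_set[of "{..<arch ! Suc K}" 0 "\<lambda>k. \<bar>?a x k - ?a y k\<bar>"] assms(3)
    by (simp add: L)
  also have "\<dots> \<le> layer_frobenius arch Phi K
      * L2_set (\<lambda>k. hidden_state arch Phi K x k - hidden_state arch Phi K y k) {..<arch ! K}"
    unfolding layer_frobenius_def by (rule L2_set_affine_diff_le) simp
  also have "\<dots> \<le> layer_frobenius arch Phi K
      * ((\<Prod>t<K. layer_frobenius arch Phi t) * L2_set (\<lambda>j. x j - y j) {..<arch ! 0})"
    using hidden_state_diff_le by (rule mult_left_mono) (simp add: layer_frobenius_def)
  finally show ?thesis by (simp add: L mult_ac)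
qed

lemma lq_norm_weights_le_net_norm:
  assumes "i < length Phi"
  shows "lq_norm q ({..<arch ! Suc i} \<times> {..<arch ! i}) (\<lambda>(r, s). fst (Phi ! i) r s)
           \<le> net_norm q arch Phi"
  unfolding net_norm_def by (rule order_trans[OF max.cobounded1 Max_ge]) (use assms in auto)

lemma hyp_class_diff_le:
  assumes q: "1 \<le> q" and arch: "length arch = Suc L" "L \<ge> 1" "arch ! L \<ge> 1"
    and u: "u \<in> hyp_class q arch c"
  shows "\<bar>u x - u y\<bar> \<le> c ^ L * (\<Prod>t<L. real (arch ! Suc t * arch ! t)) powr (l2_lq_exponent q / 2)
           * L2_set (\<lambda>j. x j - y j) {..<arch ! 0}"
proof -
  obtain Phi where u: "u = realization arch Phi" and len: "length Phi = L"
    and c: "net_norm q arch Phi \<le> c"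
    using u arch(1) unfolding hyp_class_def by auto
  have frobenius_le: "layer_frobenius arch Phi t
      \<le> c * real (arch ! Suc t * arch ! t) powr (l2_lq_exponent q / 2)" if "t < L" for t
  proof -
    have "layer_frobenius arch Phi t
        \<le> real (card ({..<arch ! Suc t} \<times> {..<arch ! t})) powr (l2_lq_exponent q / 2)
          * lq_norm q ({..<arch ! Suc t} \<times> {..<arch ! t}) (\<lambda>(r, s). fst (Phi ! t) r s)"
      unfolding layer_frobenius_def by (rule L2_set_le_lq_norm) (simp_all add: q)
    also have "\<dots> \<le> real (card ({..<arch ! Suc t} \<times> {..<arch ! t})) powr (l2_lq_exponent q / 2) * c"
      using lq_norm_weights_le_net_norm[of t Phi q arch] len that c by (intro mult_left_mono) auto
    finally show ?thesis by (simp add: card_cartesian_product mult.commute)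
  qed
  have "\<bar>u x - u y\<bar> \<le> (\<Prod>t<L. layer_frobenius arch Phi t) * L2_set (\<lambda>j. x j - y j) {..<arch ! 0}"
    unfolding u by (rule realization_diff_le[OF len arch(2,3)])
  also have "\<dots> \<le> (\<Prod>t<L. c * real (arch ! Suc t * arch ! t) powr (l2_lq_exponent q / 2))
      * L2_set (\<lambda>j. x j - y j) {..<arch ! 0}"
    by (intro mult_right_mono prod_mono conjI layer_frobenius_nonneg frobenius_le) simp_all
  also have "(\<Prod>t<L. c * real (arch ! Suc t * arch ! t) powr (l2_lq_exponent q / 2))
      = c ^ L * (\<Prod>t<L. real (arch ! Suc t * arch ! t)) powr (l2_lq_exponent q / 2)"
    by (simp only: prod.distrib prod_powr_distrib prod_constant card_lessThan)
  finally show ?thesis .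
qed

lemma prod_lessThan_adjacent_mult:
  fixes a :: "nat \<Rightarrow> 'a::comm_monoid_mult"
  assumes "L \<ge> 1"
  shows "(\<Prod>t<L. a (Suc t) * a t) = a 0 * a L * (\<Prod>t\<in>{1..<L}. a t) ^ 2"
proof -
  have "(\<Prod>t<L. a t) = a 0 * (\<Prod>t\<in>{1..<L}. a t)"
    using assms by (simp add: lessThan_atLeast0 prod.atLeast_Suc_lessThan)
  moreover have "(\<Prod>t<L. a (Suc t)) = prod a {Suc 0..<Suc L}"
    by (simp only: lessThan_atLeast0 prod.shift_bounds_Suc_ivl)
  then have "(\<Prod>t<L. a (Suc t)) = (\<Prod>t\<in>{1..<L}. a t) * a L"
    using assms by (simp add: prod.atLeastLessThan_Suc)
  ultimately show ?thesis by (simp add: prod.distrib power2_eq_square mult_ac)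
qed

lemma std_arch_nth:
  "t \<le> L \<Longrightarrow> ([d] @ map N [1..<L] @ [1]) ! t = (if t = 0 then d else if t = L then 1 else N t)"
  by (cases t) (auto simp: nth_append)

lemma prod_std_arch_layer_sizes:
  fixes d :: nat and N :: "nat \<Rightarrow> nat"
  assumes "L \<ge> 1"
  defines "arch \<equiv> [d] @ map N [1..<L] @ [1]"
  shows "(\<Prod>t<L. real (arch ! Suc t * arch ! t)) = real d * real (\<Prod>i\<in>{1..<L}. N i) ^ 2"
proof -
  have arch_nth: "arch ! t = (if t = 0 then d else if t = L then 1 else N t)" if "t \<le> L" for t
    unfolding arch_def using that by (rule std_arch_nth)
  have "(\<Prod>t<L. real (arch ! Suc t * arch ! t))
      = real (arch ! 0) * real (arch ! L) * (\<Prod>t\<in>{1..<L}. real (arch ! t)) ^ 2"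
    using prod_lessThan_adjacent_mult[OF assms(1), of "\<lambda>t. real (arch ! t)"] by simp
  also have "(\<Prod>t\<in>{1..<L}. real (arch ! t)) = (\<Prod>t\<in>{1..<L}. real (N t))"
    by (rule prod.cong) (simp_all add: arch_nth)
  finally show ?thesis using assms(1) by (simp add: arch_nth)
qed

lemma hyp_class_std_arch_diff_le:
  assumes "L \<ge> 1" "1 \<le> q" "u \<in> hyp_class q ([d] @ map N [1..<L] @ [1]) c"
  shows "\<bar>u x - u y\<bar> \<le> c ^ L * (sqrt (real d) * real (\<Prod>i\<in>{1..<L}. N i)) powr l2_lq_exponent q
           * L2_set (\<lambda>j. x j - y j) {..<d}"
proof -
  let ?arch = "[d] @ map N [1..<L] @ [1]"
  let ?s = "sqrt (real d) * real (\<Prod>i\<in>{1..<L}. N i)"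
  have "real d * real (\<Prod>i\<in>{1..<L}. N i) ^ 2 = ?s powr 2"
    by (simp add: power_mult_distrib prod_nonneg)
  then have sizes: "(\<Prod>t<L. real (?arch ! Suc t * ?arch ! t)) powr (l2_lq_exponent q / 2)
      = ?s powr l2_lq_exponent q"
    unfolding prod_std_arch_layer_sizes[OF assms(1)] by (simp add: powr_powr)
  have "length ?arch = Suc L" "?arch ! L = 1" "?arch ! 0 = d"
    using assms(1) by (simp_all add: nth_append)
  then have "\<bar>u x - u y\<bar> \<le> c ^ L * (\<Prod>t<L. real (?arch ! Suc t * ?arch ! t)) powr (l2_lq_exponent q / 2)
      * L2_set (\<lambda>j. x j - y j) {..<d}"
    using hyp_class_diff_le[OF assms(2) _ assms(1) _ assms(3)] by simp
  then show ?thesis unfolding sizes .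
qed

lemma component_measurable [measurable]: "(\<lambda>x. x j) \<in> borel_measurable (cube_measure d)"
proof (cases "j < d")
  case True
  have "(\<lambda>x. x j) \<in> cube_measure d \<rightarrow>\<^sub>M restrict_space lborel {0..1::real}"
    unfolding cube_measure_def by (rule measurable_component_singleton) (use True in simp)
  moreover have "(\<lambda>x::real. x) \<in> restrict_space lborel {0..1} \<rightarrow>\<^sub>M borel"
    by (rule measurable_restrict_space1) simp
  ultimately show ?thesis by (rule measurable_compose)
next
  case False
  show ?thesis
    by (rule measurable_cong[where g = "\<lambda>_. undefined", THEN iffD2])
      (use False in \<open>auto simp: cube_measure_def space_PiM PiE_def extensional_def\<close>)
qed

lemma hidden_state_measurable [measurable]:
  "(\<lambda>x. hidden_state arch Phi i x k) \<in> borel_measurable (cube_measure d)"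
proof (induction i arbitrary: k)
  case 0
  then show ?case by simp
next
  case (Suc i)
  note [measurable] = Suc.IH
  show ?case by (simp add: relu_def affine_def)
qed

lemma realization_measurable [measurable]:
  "realization arch Phi \<in> borel_measurable (cube_measure d)"
  unfolding realization_def Let_def affine_def by measurable

lemma hyp_class_measurable: "u \<in> hyp_class q arch c \<Longrightarrow> u \<in> borel_measurable (cube_measure d)"
  by (auto simp: hyp_class_def)

lemma linf_enorm_le:
  assumes "f \<in> borel_measurable (cube_measure d)" "\<And>x. x \<in> cube d \<Longrightarrow> \<bar>f x\<bar> \<le> B"
  shows "linf_enorm d f \<le> ennreal B"
proof -
  have "space (cube_measure d) = cube d"
    by (simp add: cube_measure_def cube_def space_PiM)
  then have "esssup (cube_measure d) (\<lambda>x. ereal \<bar>f x\<bar>) \<le> ereal B"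
    using assms by (intro esssup_I) auto
  then show ?thesis unfolding linf_enorm_def using e2ennreal_mono by fastforce
qed

section \<open>Reconstruction from samples on a uniform grid\<close>

(* the index k of the cell [k/n, (k+1)/n] containing t; the cap puts t = 1 into the last cell *)
definition cell_index :: "nat \<Rightarrow> real \<Rightarrow> real" where
  "cell_index n t = min (real n - 1) (of_int \<lfloor>real n * t\<rfloor>)"

lemma cell_index_bounds:
  assumes n: "n \<ge> 1" and t: "0 \<le> t" "t \<le> 1"
  obtains k where "k < n" "cell_index n t = real k" "\<bar>t - real k / real n\<bar> \<le> 1 / real n"
proof
  define k where "k = min (n - 1) (nat \<lfloor>real n * t\<rfloor>)"
  have nt: "0 \<le> real n * t" using t by simp
  then have floor: "real (nat \<lfloor>real n * t\<rfloor>) \<le> real n * t"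
    "real n * t < real (nat \<lfloor>real n * t\<rfloor>) + 1" by linarith+
  show "k < n" using n by (simp add: k_def)
  have "real (nat \<lfloor>real n * t\<rfloor>) = of_int \<lfloor>real n * t\<rfloor>" using nt by simp
  then show "cell_index n t = real k"
    using n by (simp add: k_def cell_index_def flip: of_nat_min)
  have "real k \<le> real n * t" using floor by (simp add: k_def)
  moreover have "real n * t \<le> real k + 1"
    using floor n t by (auto simp: k_def min_def mult_left_le)
  ultimately have "\<bar>real n * t - real k\<bar> \<le> 1" by simp
  then show "\<bar>t - real k / real n\<bar> \<le> 1 / real n"
    using n by (simp add: field_simps flip: abs_mult)
qed

(* e enumerates the integer grid {..<n}^d; ys ! k is taken as the value on the cell with
   lower corner e k / n *)
definition grid_interpolant :: "nat \<Rightarrow> nat \<Rightarrow> (nat \<Rightarrow> nat \<Rightarrow> nat) \<Rightarrow> real list \<Rightarrow> point \<Rightarrow> real" where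
  "grid_interpolant d n e ys x =
     (\<Sum>k<n ^ d. if \<forall>j\<in>{..<d}. cell_index n (x j) = real (e k j) then ys ! k else 0)"

lemma grid_interpolant_measurable [measurable]:
  "grid_interpolant d n e ys \<in> borel_measurable (cube_measure d)"
  unfolding grid_interpolant_def cell_index_def by measurable

lemma grid_interpolant_in_Linf: "grid_interpolant d n e ys \<in> Linf d"
proof -
  have "linf_enorm d (grid_interpolant d n e ys) \<le> ennreal (\<Sum>k<n ^ d. \<bar>ys ! k\<bar>)"
  proof (rule linf_enorm_le)
    fix x
    show "\<bar>grid_interpolant d n e ys x\<bar> \<le> (\<Sum>k<n ^ d. \<bar>ys ! k\<bar>)"
      unfolding grid_interpolant_def by (rule order_trans[OF sum_abs sum_mono]) auto
  qed simp
  then show ?thesis by (auto simp: Linf_def top.not_eq_extremum intro: le_less_trans)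
qed

lemma cube_cell_coords:
  assumes n: "n \<ge> 1" and x: "x \<in> cube d"
  obtains c where "\<forall>j\<in>{..<d}. c j < n \<and> cell_index n (x j) = real (c j)
    \<and> \<bar>x j - real (c j) / real n\<bar> \<le> 1 / real n"
proof -
  have "\<forall>j\<in>{..<d}. \<exists>k. k < n \<and> cell_index n (x j) = real k \<and> \<bar>x j - real k / real n\<bar> \<le> 1 / real n"
  proof
    fix j assume "j \<in> {..<d}"
    then have "0 \<le> x j" "x j \<le> 1"
      using PiE_mem[of x "{..<d}" "\<lambda>_. {0..1}" j] x by (simp_all add: cube_def)
    then show "\<exists>k. k < n \<and> cell_index n (x j) = real k \<and> \<bar>x j - real k / real n\<bar> \<le> 1 / real n"
      by (rule cell_index_bounds[OF n]) blast
  qed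
  then show ?thesis using that by (rule bchoice[THEN exE])
qed

lemma grid_interpolant_eq:
  assumes n: "n \<ge> 1" and e: "bij_betw e {..<n ^ d} (PiE {..<d} (\<lambda>_. {..<n}))"
    and x: "x \<in> cube d"
  obtains k where "k < n ^ d" "\<And>ys. grid_interpolant d n e ys x = ys ! k"
    "\<And>j. j < d \<Longrightarrow> \<bar>x j - real (e k j) / real n\<bar> \<le> 1 / real n"
proof -
  obtain c where c: "\<forall>j\<in>{..<d}. c j < n \<and> cell_index n (x j) = real (c j)
      \<and> \<bar>x j - real (c j) / real n\<bar> \<le> 1 / real n"
    using cube_cell_coords[OF n x] by blast
  have "restrict c {..<d} \<in> e ` {..<n ^ d}"
    using c by (simp add: bij_betw_imp_surj_on[OF e] restrict_PiE_iff)
  then obtain k where k: "k < n ^ d" "e k = restrict c {..<d}" by auto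
  have cell_iff: "(\<forall>j\<in>{..<d}. cell_index n (x j) = real (e i j)) \<longleftrightarrow> i = k" if "i < n ^ d" for i
  proof -
    have "e i \<in> PiE {..<d} (\<lambda>_. {..<n})" using bij_betwE[OF e] that by simp
    then have "(\<forall>j\<in>{..<d}. cell_index n (x j) = real (e i j)) \<longleftrightarrow> e i = e k"
      unfolding k(2) using c by (auto simp: PiE_iff extensional_def fun_eq_iff)
    also have "\<dots> \<longleftrightarrow> i = k"
      using inj_onD[OF bij_betw_imp_inj_on[OF e]] that k(1) by auto
    finally show ?thesis .
  qed
  show ?thesis
  proof
    show "k < n ^ d" by (rule k(1))
    show "grid_interpolant d n e ys x = ys ! k" for ys
    proof -
      have "grid_interpolant d n e ys x = (\<Sum>i<n ^ d. if i = k then ys ! i else 0)"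
        unfolding grid_interpolant_def by (rule sum.cong) (simp_all add: cell_iff)
      then show ?thesis using k(1) by simp
    qed
    show "\<bar>x j - real (e k j) / real n\<bar> \<le> 1 / real n" if "j < d" for j
      using c that by (simp add: k(2))
  qed
qed

lemma samples_nonadaptive: "samples (\<lambda>k _ _. g k) u m = map g [0..<m]"
  by (induction m) (simp_all add: Let_def)

(* the nodes with index k >= n^d are never used by the interpolant; they are put at the origin *)
definition grid_node :: "nat \<Rightarrow> nat \<Rightarrow> (nat \<Rightarrow> nat \<Rightarrow> nat) \<Rightarrow> nat \<Rightarrow> point" where
  "grid_node d n e k = (\<lambda>j\<in>{..<d}. if k < n ^ d then real (e k j) / real n else 0)"

lemma grid_node_in_cube:
  assumes "n \<ge> 1" and e: "bij_betw e {..<n ^ d} (PiE {..<d} (\<lambda>_. {..<n}))"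
  shows "grid_node d n e k \<in> cube d"
proof (cases "k < n ^ d")
  case True
  then have "e k j < n" if "j < d" for j using bij_betwE[OF e] that by (auto simp: PiE_iff)
  then show ?thesis
    using True assms(1) by (simp add: grid_node_def cube_def restrict_PiE_iff Pi_iff less_imp_le)
qed (simp add: grid_node_def cube_def restrict_PiE_iff)

lemma grid_interpolant_error:
  assumes n: "n \<ge> 1" "n ^ d \<le> m" and e: "bij_betw e {..<n ^ d} (PiE {..<d} (\<lambda>_. {..<n}))"
    and K: "K \<ge> 0" and u: "u \<in> borel_measurable (cube_measure d)"
    and lip: "\<And>x y. x \<in> cube d \<Longrightarrow> y \<in> cube d \<Longrightarrow> \<bar>u x - u y\<bar> \<le> K * L2_set (\<lambda>j. x j - y j) {..<d}"
  shows "linf_enorm d (\<lambda>x. u x - grid_interpolant d n e (map (u \<circ> grid_node d n e) [0..<m]) x)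
           \<le> ennreal (K * sqrt (real d) / real n)"
proof (rule linf_enorm_le)
  show "(\<lambda>x. u x - grid_interpolant d n e (map (u \<circ> grid_node d n e) [0..<m]) x)
      \<in> borel_measurable (cube_measure d)"
    using u by simp
next
  fix x assume x: "x \<in> cube d"
  obtain k where k: "k < n ^ d" "\<And>ys. grid_interpolant d n e ys x = ys ! k"
    and near: "\<And>j. j < d \<Longrightarrow> \<bar>x j - real (e k j) / real n\<bar> \<le> 1 / real n"
    using grid_interpolant_eq[OF n(1) e x] by blast
  have "L2_set (\<lambda>j. x j - grid_node d n e k j) {..<d}
      = L2_set (\<lambda>j. \<bar>x j - grid_node d n e k j\<bar>) {..<d}"
    by simp
  also have "\<dots> \<le> L2_set (\<lambda>_. 1 / real n) {..<d}"
    by (rule L2_set_mono) (simp_all add: near grid_node_def k(1))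
  finally have dist: "L2_set (\<lambda>j. x j - grid_node d n e k j) {..<d} \<le> L2_set (\<lambda>_. 1 / real n) {..<d}" .
  have "\<bar>u x - grid_interpolant d n e (map (u \<circ> grid_node d n e) [0..<m]) x\<bar>
      = \<bar>u x - u (grid_node d n e k)\<bar>"
    using k n(2) by simp
  also have "\<dots> \<le> K * L2_set (\<lambda>j. x j - grid_node d n e k j) {..<d}"
    using lip[OF x grid_node_in_cube[OF n(1) e]] .
  also have "\<dots> \<le> K * L2_set (\<lambda>_. 1 / real n) {..<d}" by (rule mult_left_mono[OF dist K])
  also have "\<dots> = K * sqrt (real d) / real n" by (simp add: L2_set_constant)
  finally show "\<bar>u x - grid_interpolant d n e (map (u \<circ> grid_node d n e) [0..<m]) x\<bar>
      \<le> K * sqrt (real d) / real n" .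
qed

lemma grid_algorithm_error:
  fixes U :: "(point \<Rightarrow> real) set"
  assumes n: "n \<ge> 1" "n ^ d \<le> m" and K: "K \<ge> 0"
    and meas: "\<And>u. u \<in> U \<Longrightarrow> u \<in> borel_measurable (cube_measure d)"
    and lip: "\<And>u x y. u \<in> U \<Longrightarrow> x \<in> cube d \<Longrightarrow> y \<in> cube d
                \<Longrightarrow> \<bar>u x - u y\<bar> \<le> K * L2_set (\<lambda>j. x j - y j) {..<d}"
  shows "\<exists>A\<in>Alg m U d. \<forall>u\<in>U.
           linf_enorm d (\<lambda>x. u x - A u x) \<le> ennreal (K * sqrt (real d) / real n)"
proof -
  have "card (PiE {..<d} (\<lambda>_. {..<n})) = n ^ d" by (simp add: card_PiE)
  then obtain e where e: "bij_betw e {..<n ^ d} (PiE {..<d} (\<lambda>_. {..<n}))"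
    using ex_bij_betw_nat_finite[of "PiE {..<d} (\<lambda>_. {..<n})"]
    by (auto simp: finite_PiE lessThan_atLeast0)
  define A where "A u = grid_interpolant d n e (map (u \<circ> grid_node d n e) [0..<m])" for u
  have "A \<in> Alg m U d"
    unfolding Alg_def
    by (intro CollectI exI[of _ "\<lambda>k _ _. grid_node d n e k"] exI[of _ "\<lambda>_. grid_interpolant d n e"] conjI)
      (simp_all add: grid_node_in_cube[OF n(1) e] grid_interpolant_in_Linf samples_nonadaptive A_def)
  moreover have "linf_enorm d (\<lambda>x. u x - A u x) \<le> ennreal (K * sqrt (real d) / real n)"
    if "u \<in> U" for u
    unfolding A_def using n e K meas[OF that] lip[OF that] by (rule grid_interpolant_error)
  ultimately show ?thesis by blast
qed

(* a deterministic algorithm is a Monte Carlo method over a one-point probability space *)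
lemma errMC_le_Alg_error:
  assumes "\<exists>A\<in>Alg m U d. \<forall>u\<in>U. linf_enorm d (\<lambda>x. u x - A u x) \<le> B"
  shows "errMC TYPE('w) m U d \<le> B"
proof -
  obtain A where A: "A \<in> Alg m U d" and err: "\<And>u. u \<in> U \<Longrightarrow> linf_enorm d (\<lambda>x. u x - A u x) \<le> B"
    using assms by blast
  define P where "P = return (count_space (UNIV :: 'w set)) undefined"
  have P: "prob_space P" unfolding P_def by (rule prob_space_return) simp
  have "A u \<in> space (Linf_borel d)" if "u \<in> U" for u
    using A that unfolding Alg_def Linf_borel_def by (auto simp: space_measure_of_conv)
  then have "(P, \<lambda>_. A, \<lambda>_. m) \<in> AlgMC TYPE('w) m U d"
    using A P by (simp add: AlgMC_def prob_space.emeasure_space_1[OF P])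
  then have "errMC TYPE('w) m U d \<le> (SUP u\<in>U. \<integral>\<^sup>+ _. linf_enorm d (\<lambda>x. u x - A u x) \<partial>P)"
    unfolding errMC_def by (rule INF_lower2) simp
  also have "\<dots> \<le> B"
    using err by (simp add: prob_space.emeasure_space_1[OF P] SUP_least)
  finally show ?thesis .
qed

lemma grid_size:
  fixes m d :: nat
  assumes m: "m \<ge> 1" and d: "d \<ge> 1"
  defines "n \<equiv> nat \<lfloor>real m powr (1 / real d)\<rfloor>"
  shows "n \<ge> 1" "n ^ d \<le> m" "1 / real n \<le> 2 * real m powr (- 1 / real d)"
proof -
  define t where "t = real m powr (1 / real d)"
  have t: "t \<ge> 1" unfolding t_def using m by (intro ge_one_powr_ge_zero) auto
  have nt: "real n \<le> t" "t < real n + 1" unfolding n_def t_def[symmetric] using t by linarith+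
  show n: "n \<ge> 1" unfolding n_def t_def[symmetric] using t by linarith
  have "real n ^ d \<le> t ^ d" using nt by (intro power_mono) auto
  also have "t ^ d = t powr real d" using t by (simp add: powr_realpow)
  also have "\<dots> = real m" unfolding t_def using d by (simp add: powr_powr)
  finally show "n ^ d \<le> m" by (metis of_nat_le_iff of_nat_power)
  have "t \<le> 2 * real n" using nt n by linarith
  then have "1 / real n \<le> 2 * (1 / t)" using n t by (simp add: field_simps)
  also have "1 / t = real m powr (- 1 / real d)" by (simp add: t_def flip: powr_minus_divide)
  finally show "1 / real n \<le> 2 * real m powr (- 1 / real d)" .
qed

theorem theorem2p7:
  fixes L d m :: nat and q :: ereal and c :: real and N :: "nat \<Rightarrow> nat"
  assumes "L \<ge> 1" and "d \<ge> 1" and "1 \<le> q" and "c > 0"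
    and "\<forall>i\<in>{1..<L}. N i \<ge> 1" and "m \<ge> 1"
  shows "errMC TYPE('w) m (hyp_class q ([d] @ map N [1..<L] @ [1]) c) d \<le>
    ennreal (if q \<le> 2
      then 2 * sqrt (real d) * c ^ L * real m powr (- 1 / real d)
      else 2 * sqrt (real d) * c ^ L
             * (sqrt (real d) * real (\<Prod>i\<in>{1..<L}. N i))
                 powr (if q = \<infinity> then 1 else 1 - 2 / real_of_ereal q)
             * real m powr (- 1 / real d))"
proof -
  let ?U = "hyp_class q ([d] @ map N [1..<L] @ [1]) c"
  define K where "K = c ^ L * (sqrt (real d) * real (\<Prod>i\<in>{1..<L}. N i)) powr l2_lq_exponent q"
  define n where "n = nat \<lfloor>real m powr (1 / real d)\<rfloor>"
  note n = grid_size[OF \<open>m \<ge> 1\<close> \<open>d \<ge> 1\<close>, folded n_def]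
  have K: "K \<ge> 0" using \<open>c > 0\<close> by (simp add: K_def)
  have lip: "\<bar>u x - u y\<bar> \<le> K * L2_set (\<lambda>j. x j - y j) {..<d}"
    if "u \<in> ?U" "x \<in> cube d" "y \<in> cube d" for u x y
    unfolding K_def by (rule hyp_class_std_arch_diff_le[OF assms(1,3) that(1)])
  have "errMC TYPE('w) m ?U d \<le> ennreal (K * sqrt (real d) / real n)"
    by (rule errMC_le_Alg_error[OF grid_algorithm_error[OF n(1,2) K hyp_class_measurable lip]])
  also have "\<dots> \<le> ennreal (K * sqrt (real d) * (2 * real m powr (- 1 / real d)))"
    using mult_left_mono[OF n(3), of "K * sqrt (real d)"] K by (intro ennreal_leI) simp
  also have "K * sqrt (real d) * (2 * real m powr (- 1 / real d)) = (if q \<le> 2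
      then 2 * sqrt (real d) * c ^ L * real m powr (- 1 / real d)
      else 2 * sqrt (real d) * c ^ L
             * (sqrt (real d) * real (\<Prod>i\<in>{1..<L}. N i))
                 powr (if q = \<infinity> then 1 else 1 - 2 / real_of_ereal q)
             * real m powr (- 1 / real d))"
  proof -
    have "\<forall>i\<in>{1..<L}. N i \<noteq> 0" using assms(5) by auto
    then show ?thesis using assms(2) by (simp add: K_def l2_lq_exponent_def) fastforce
  qed
  finally show ?thesis .
qed

end
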